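(* With $\mathcal I_s$ as defined in the context, the probability that a uniformly random $(E,G_{p,n})\in\mathcal I_s$, with $E$ having constants $c_j=(\bar c_j,\beta_j)$, $j=1,\dots,m$, satisfies $\beta_i\neq1$ for some $i$, tends to $1$ exponentially fast as $s\to\infty$.
   Context: For a prime $p$ and $n\in\mathbb{N}$, $G_{p,n}=\mathbb{Z}_p^n\rtimes\mathbb{Z}_p^\ast$ is the set of pairs $(\bar x,\alpha)$ with $\bar x\in\mathbb{Z}_p^n$, $\alpha\in\mathbb{Z}_p^\ast$, with multiplication $(\bar x,\alpha)(\bar y,\beta)=(\bar x+\alpha\bar y,\alpha\beta)$. For $s\in\mathbb{N}$, $\mathcal I_s$ is the set of all pairs $(E,G_{p,n})$ where $p\le s$ is prime, $1\le n\le s$, $1\le m\le s$, and $E$ is a spherical equation $\prod_{j=1}^m z_j^{-1}c_jz_j=1$ with constants $c_1,\dots,c_m\in G_{p,n}$ (identified with $(c_1,\dots,c_m)\in G_{p,n}^m$), equipped with the uniform distribution. *)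

theory Defs
  imports Complex_Main "HOL-Computational_Algebra.Primes"
begin

text \<open>Elements of G_{p,n} = Z_p^n \<rtimes> Z_p^*: pairs (x, alpha), where x is a vector of
  length n with entries residues 0..p-1, and alpha a unit residue in 1..p-1.\<close>
definition Gpn :: "nat \<Rightarrow> nat \<Rightarrow> (nat list \<times> nat) set" where
  "Gpn p n = {(x, a). length x = n \<and> (\<forall>i\<in>set x. i < p) \<and> a \<in> {1..<p}}"

definition Gpn_mult :: "nat \<Rightarrow> nat list \<times> nat \<Rightarrow> nat list \<times> nat \<Rightarrow> nat list \<times> nat" where
  "Gpn_mult p g h = (map2 (\<lambda>u v. (u + snd g * v) mod p) (fst g) (fst h), (snd g * snd h) mod p)"

text \<open>The instance set I_s: a triple (p, n, cs) stands for the pair (E, G_{p,n}) where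
  E is the spherical equation with constants cs = [c_1,...,c_m], m = length cs.\<close>
definition Inst :: "nat \<Rightarrow> (nat \<times> nat \<times> (nat list \<times> nat) list) set" where
  "Inst s = {(p, n, cs). prime p \<and> p \<le> s \<and> 1 \<le> n \<and> n \<le> s \<and>
                         1 \<le> length cs \<and> length cs \<le> s \<and> set cs \<subseteq> Gpn p n}"

definition prob_nontriv :: "nat \<Rightarrow> real" where
  "prob_nontriv s = real (card {(p, n, cs) \<in> Inst s. \<exists>c\<in>set cs. snd c \<noteq> 1}) / real (card (Inst s))"

end

theory Submission
  imports Defs "HOL-Real_Asymp.Real_Asymp"
begin

text \<open>An instance with all \<open>\<beta>\<^sub>i = 1\<close> is a list of at most \<open>s\<close> vectors of \<open>\<int>\<^sub>p\<^sup>n\<close>, so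
  there are at most \<open>(s + 1) s\<^sup>2 q^(s\<^sup>2)\<close> of them, \<open>q\<close> being the largest prime \<open>\<le> s\<close>. The
  instances over \<open>G\<^sub>q\<^sub>,\<^sub>s\<close> with \<open>s\<close> constants alone number \<open>(q\<^sup>s (q - 1))\<^sup>s \<ge> q^(s\<^sup>2) 2\<^sup>s\<close> once
  \<open>q \<ge> 3\<close>, so the exceptional proportion is at most \<open>(s + 1) s\<^sup>2 / 2\<^sup>s = O((3/4)\<^sup>s)\<close>.\<close>

definition residue_vectors :: "nat \<Rightarrow> nat \<Rightarrow> nat list set" where
  "residue_vectors p n = {x. set x \<subseteq> {..<p} \<and> length x = n}"

lemma finite_residue_vectors: "finite (residue_vectors p n)"
  unfolding residue_vectors_def by (rule finite_lists_length_eq) simp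

lemma card_residue_vectors: "card (residue_vectors p n) = p ^ n"
  unfolding residue_vectors_def by (subst card_lists_length_eq) simp_all

lemma Gpn_eq_Times: "Gpn p n = residue_vectors p n \<times> {1..<p}"
  unfolding Gpn_def residue_vectors_def by auto

lemma finite_Gpn: "finite (Gpn p n)"
  by (simp add: Gpn_eq_Times finite_residue_vectors)

lemma card_Gpn: "card (Gpn p n) = p ^ n * (p - 1)"
  by (simp add: Gpn_eq_Times finite_residue_vectors card_residue_vectors card_cartesian_product)

lemma finite_Inst: "finite (Inst s)"
proof (rule finite_subset)
  show "Inst s \<subseteq> (SIGMA p:{..s}. SIGMA n:{..s}. {cs. set cs \<subseteq> Gpn p n \<and> length cs \<le> s})"
    unfolding Inst_def by auto
  show "finite \<dots>"
    by (auto intro!: finite_lists_length_le finite_Gpn)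
qed

definition trivial_instances :: "nat \<Rightarrow> (nat \<times> nat \<times> (nat list \<times> nat) list) set" where
  "trivial_instances s = {(p, n, cs) \<in> Inst s. \<forall>c\<in>set cs. snd c = 1}"

lemma one_minus_prob_nontriv:
  assumes "Inst s \<noteq> {}"
  shows "1 - prob_nontriv s = card (trivial_instances s) / card (Inst s)"
proof -
  define N where "N = {(p, n, cs) \<in> Inst s. \<exists>c\<in>set cs. snd c \<noteq> 1}"
  have "Inst s = N \<union> trivial_instances s" "N \<inter> trivial_instances s = {}"
    unfolding N_def trivial_instances_def by auto
  then have "real (card N) + card (trivial_instances s) = card (Inst s)"
    using finite_Inst by (metis card_Un_disjoint finite_Un of_nat_add)
  moreover have "real (card (Inst s)) > 0"
    using assms finite_Inst by (simp add: card_gt_0_iff)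
  ultimately show ?thesis
    unfolding prob_nontriv_def N_def[symmetric] by (simp add: field_simps)
qed

lemma prob_nontriv_bounds: "0 \<le> prob_nontriv s" "prob_nontriv s \<le> 1"
proof -
  have "card {(p, n, cs) \<in> Inst s. \<exists>c\<in>set cs. snd c \<noteq> 1} \<le> card (Inst s)"
    by (rule card_mono[OF finite_Inst]) auto
  then show "0 \<le> prob_nontriv s" "prob_nontriv s \<le> 1"
    unfolding prob_nontriv_def by (auto simp: divide_le_eq_1)
qed

lemma card_lists_length_le_le:
  assumes "finite A" "A \<noteq> {}"
  shows "card {xs. set xs \<subseteq> A \<and> length xs \<le> m} \<le> (m + 1) * card A ^ m"
proof -
  have "card {xs. set xs \<subseteq> A \<and> length xs \<le> m} = (\<Sum>i\<le>m. card A ^ i)"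
    using assms(1) by (rule card_lists_length_le)
  also have "\<dots> \<le> (\<Sum>i\<le>m. card A ^ m)"
    using assms by (intro sum_mono power_increasing) (auto simp: Suc_le_eq card_gt_0_iff)
  finally show ?thesis by simp
qed

lemma card_trivial_instances_le:
  assumes q: "\<And>p. prime p \<Longrightarrow> p \<le> s \<Longrightarrow> p \<le> q"
  shows "card (trivial_instances s) \<le> s * s * ((s + 1) * q ^ (s * s))"
proof -
  define P where "P = {p. prime p \<and> p \<le> s}"
  define T where "T p n = {cs. set cs \<subseteq> residue_vectors p n \<times> {1::nat} \<and> length cs \<le> s}" for p n
  have finite_T: "finite (T p n)" for p n
    unfolding T_def by (intro finite_lists_length_le) (simp add: finite_residue_vectors)
  have "trivial_instances s \<subseteq> (SIGMA p:P. SIGMA n:{1..s}. T p n)"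
  proof
    fix x assume "x \<in> trivial_instances s"
    then obtain p n cs where x: "x = (p, n, cs)" and I: "(p, n, cs) \<in> Inst s"
      and one: "\<forall>c\<in>set cs. snd c = 1"
      unfolding trivial_instances_def by auto
    have "set cs \<subseteq> residue_vectors p n \<times> {1..<p}"
      using I by (simp add: Inst_def Gpn_eq_Times)
    with one have "set cs \<subseteq> residue_vectors p n \<times> {1}"
      by (auto simp: mem_Times_iff)
    with I show "x \<in> (SIGMA p:P. SIGMA n:{1..s}. T p n)"
      unfolding x by (simp add: Inst_def P_def T_def)
  qed
  then have "card (trivial_instances s) \<le> card (SIGMA p:P. SIGMA n:{1..s}. T p n)"
    by (rule card_mono[rotated]) (auto simp: P_def finite_T)
  also have "\<dots> = (\<Sum>p\<in>P. \<Sum>n\<in>{1..s}. card (T p n))"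
    by (simp add: P_def finite_T)
  also have "\<dots> \<le> (\<Sum>p\<in>P. \<Sum>n\<in>{1..s}. (s + 1) * q ^ (s * s))"
  proof (intro sum_mono)
    fix p n assume "p \<in> P" "n \<in> {1..s}"
    then have "prime p" "p \<le> q" "n \<le> s" using q by (auto simp: P_def)
    have "residue_vectors p n \<noteq> {}"
      using card_residue_vectors[of p n] prime_gt_0_nat[OF \<open>prime p\<close>] by auto
    then have "card (T p n) \<le> (s + 1) * (p ^ n) ^ s"
      using card_lists_length_le_le[of "residue_vectors p n \<times> {1::nat}" s]
      by (simp add: T_def finite_residue_vectors card_residue_vectors card_cartesian_product)
    moreover have "(p ^ n) ^ s \<le> q ^ (s * s)"
    proof -
      have "(p ^ n) ^ s \<le> q ^ (n * s)"
        using \<open>p \<le> q\<close> by (simp add: power_mult power_mono)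
      also have "\<dots> \<le> q ^ (s * s)"
        using \<open>prime p\<close> \<open>p \<le> q\<close> \<open>n \<le> s\<close> prime_gt_0_nat[of p]
        by (intro power_increasing) auto
      finally show ?thesis .
    qed
    ultimately show "card (T p n) \<le> (s + 1) * q ^ (s * s)"
      by (meson le_trans mult_le_mono2)
  qed
  also have "\<dots> = card P * (s * ((s + 1) * q ^ (s * s)))"
    by simp
  also have "\<dots> \<le> s * (s * ((s + 1) * q ^ (s * s)))"
  proof -
    have "P \<subseteq> {1..s}"
      using prime_ge_1_nat by (auto simp: P_def)
    then have "card P \<le> s"
      using card_mono[OF finite_atLeastAtMost, of P 1 s] by simp
    then show ?thesis
      by (rule mult_le_mono1)
  qed
  finally show ?thesis by simp
qed

lemma card_Inst_ge:
  assumes "prime p" "p \<le> s"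
  shows "(p ^ s * (p - 1)) ^ s \<le> card (Inst s)"
proof -
  let ?S = "{cs. set cs \<subseteq> Gpn p s \<and> length cs = s}"
  have "(p ^ s * (p - 1)) ^ s = card ((\<lambda>cs. (p, s, cs)) ` ?S)"
    by (subst card_image) (auto simp: inj_on_def card_lists_length_eq finite_Gpn card_Gpn)
  also have "\<dots> \<le> card (Inst s)"
    using assms prime_ge_1_nat[of p] by (intro card_mono[OF finite_Inst]) (auto simp: Inst_def)
  finally show ?thesis .
qed

lemma largest_prime_le:
  fixes s :: nat
  assumes "3 \<le> s"
  obtains q where "prime q" "3 \<le> q" "q \<le> s" "\<And>p. prime p \<Longrightarrow> p \<le> s \<Longrightarrow> p \<le> q"
proof
  define P where "P = {p. prime p \<and> p \<le> s}"
  have "finite P" "3 \<in> P" using assms by (auto simp: P_def)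
  then have "Max P \<in> P" "3 \<le> Max P"
    by (auto intro: Max_in Max_ge)
  then show "prime (Max P)" "Max P \<le> s" "3 \<le> Max P"
    by (auto simp: P_def)
  show "\<And>p. prime p \<Longrightarrow> p \<le> s \<Longrightarrow> p \<le> Max P"
    using \<open>finite P\<close> by (simp add: P_def)
qed

lemma trivial_fraction_le:
  assumes "3 \<le> s"
  shows "card (trivial_instances s) / card (Inst s) \<le> (real s + 1) * real s ^ 2 / 2 ^ s"
proof -
  obtain q where q: "prime q" "3 \<le> q" "q \<le> s" "\<And>p. prime p \<Longrightarrow> p \<le> s \<Longrightarrow> p \<le> q"
    using largest_prime_le[OF assms] by blast
  have "(2::nat) ^ s \<le> (q - 1) ^ s"
    using q(2) by (intro power_mono) auto
  then have "q ^ (s * s) * 2 ^ s \<le> (q ^ s * (q - 1)) ^ s"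
    by (simp add: power_mult_distrib power_mult)
  also have "\<dots> \<le> card (Inst s)"
    using card_Inst_ge q(1,3) .
  finally have "real (q ^ (s * s) * 2 ^ s) \<le> card (Inst s)"
    by (simp only: of_nat_le_iff)
  then have D: "real q ^ (s * s) * 2 ^ s \<le> card (Inst s)"
    by simp
  have "real (card (trivial_instances s)) \<le> real (s * s * ((s + 1) * q ^ (s * s)))"
    using card_trivial_instances_le[of s q, OF q(4)] by (simp only: of_nat_le_iff)
  then have N: "real (card (trivial_instances s)) \<le> s * s * ((s + 1) * real q ^ (s * s))"
    by (simp add: algebra_simps)
  have "card (trivial_instances s) / card (Inst s)
          \<le> s * s * ((s + 1) * real q ^ (s * s)) / (real q ^ (s * s) * 2 ^ s)"
    using N D q(2) by (intro frac_le) auto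
  also have "\<dots> = (real s + 1) * real s ^ 2 / 2 ^ s"
    using q(2) by (simp add: power2_eq_square)
  finally show ?thesis .
qed

lemma one_minus_prob_nontriv_le:
  assumes "2 \<le> s"
  shows "\<bar>1 - prob_nontriv s\<bar> \<le> (real s + 1) * real s ^ 2 / 2 ^ s"
proof (cases "s = 2")
  case True
  \<comment> \<open>the only prime is \<open>2\<close>, forcing all \<open>\<beta>\<^sub>i = 1\<close>; but the right-hand side is \<open>3\<close>\<close>
  then show ?thesis using prob_nontriv_bounds[of s] by simp
next
  case False
  then have "3 \<le> s" using assms by simp
  then obtain q where "prime q" "q \<le> s"
    using largest_prime_le by blast
  then have "Inst s \<noteq> {}"
    using card_Inst_ge[of q s] prime_ge_2_nat[of q] by (auto simp: Suc_le_eq)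
  then show ?thesis
    using prob_nontriv_bounds[of s] one_minus_prob_nontriv trivial_fraction_le[OF \<open>3 \<le> s\<close>] by simp
qed

theorem lemma4p4:
  shows "\<exists>C q::real. 0 < q \<and> q < 1 \<and> (\<forall>s\<ge>2. \<bar>1 - prob_nontriv s\<bar> \<le> C * q ^ s)"
proof -
  have "(\<lambda>s::nat. (real s + 1) * real s ^ 2 * (2/3) ^ s) \<longlonglongrightarrow> 0"
    by real_asymp
  then have "Bseq (\<lambda>s::nat. (real s + 1) * real s ^ 2 * (2/3) ^ s)"
    by (rule convergent_imp_Bseq[OF convergentI])
  then obtain C where C: "\<And>s. (real s + 1) * real s ^ 2 * (2/3) ^ s \<le> C"
    unfolding Bseq_def real_norm_def using abs_le_D1 by blast
  have "\<bar>1 - prob_nontriv s\<bar> \<le> C * (3/4) ^ s" if "2 \<le> s" for s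
  proof -
    have "(real s + 1) * real s ^ 2 / 2 ^ s = (real s + 1) * real s ^ 2 * ((2/3) * (3/4)) ^ s"
      by (simp add: power_one_over)
    also have "\<dots> = (real s + 1) * real s ^ 2 * (2/3) ^ s * (3/4) ^ s"
      by (simp only: power_mult_distrib mult.assoc)
    also have "\<dots> \<le> C * (3/4) ^ s"
      using C by (intro mult_right_mono) auto
    finally show ?thesis
      using one_minus_prob_nontriv_le[OF that] by simp
  qed
  then show ?thesis by (intro exI[of _ C] exI[of _ "3/4"]) simp
qed

end
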